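(* Let $R$ be a Noetherian Banach–Tate $\mathbb{Z}_p$-algebra with norm $|\cdot|$ and multiplicative pseudo-uniformizer $\varpi$, and let $\kappa:T_0\to R^\times$ be a continuous character. Then there exists a norm $|\cdot|'$ on $R$ making $R$ a Banach–Tate $\mathbb{Z}_p$-algebra, bounded-equivalent to $|\cdot|^s$ for some real $s>0$, such that $|\kappa(t)|'\le1$ for all $t\in T_0$, $|\kappa(t)-1|'<1$ for all $t\in T_\epsilon$, and $\varpi$ is a multiplicative pseudo-uniformizer for $|\cdot|'$.
   Context: $p$ prime, $\epsilon=1$ if $p\neq2$ and $\epsilon=2$ if $p=2$. $T_0=\mathbf{T}(\mathbb{Z}_p)$ where $\mathbf{T}=\prod_{v\mid p}\mathrm{Res}_{\mathcal{O}_{F_v}/\mathbb{Z}_p}\mathbf{T}_v$ for split tori $\mathbf{T}_v$ over $\mathcal{O}_{F_v}$ ($F$ a number field), and $T_\epsilon=\ker(T_0\to\mathbf{T}(\mathbb{Z}/p^\epsilon))$. Norms are non-archimedean, submultiplicative, $|1|=1$. A Banach–Tate $\mathbb{Z}_p$-algebra is a complete normed ring with a unit $\varpi$, $|\varpi|<1$, $|\varpi s|=|\varpi||s|$ for all $s$ (multiplicative pseudo-uniformizer), and a ring map $\mathbb{Z}_p\to R$ with $|x|\le|x|_p$. Norms $|\cdot|_1,|\cdot|_2$ are bounded-equivalent if $C_1|r|_1\le|r|_2\le C_2|r|_1$ for constants $C_1,C_2>0$. *)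

theory Defs
  imports "HOL-Analysis.Analysis" "HOL-Computational_Algebra.Polynomial"
begin

text \<open>For a monic integer polynomial f, the ring Z_p[x]/(f) is modelled as the inverse
limit of the finite rings Z[x]/(p^n, f).  An element is a coherent sequence a of
canonical representatives: a n is a polynomial of degree < deg f with coefficients in
[0, p^n), and reducing a (Suc n) modulo p^n gives a n.\<close>

definition red :: "nat \<Rightarrow> nat \<Rightarrow> int poly \<Rightarrow> int poly \<Rightarrow> int poly" where
  "red p n f g = map_poly (\<lambda>c. c mod (int p ^ n)) (pseudo_mod g f)"

definition Ocarr :: "nat \<Rightarrow> int poly \<Rightarrow> (nat \<Rightarrow> int poly) set" where
  "Ocarr p f = {a. \<forall>n. red p n f (a n) = a n \<and> red p n f (a (Suc n)) = a n}"

definition Oadd :: "nat \<Rightarrow> int poly \<Rightarrow> (nat \<Rightarrow> int poly) \<Rightarrow> (nat \<Rightarrow> int poly) \<Rightarrow> (nat \<Rightarrow> int poly)" where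
  "Oadd p f a b = (\<lambda>n. red p n f (a n + b n))"

definition Omult :: "nat \<Rightarrow> int poly \<Rightarrow> (nat \<Rightarrow> int poly) \<Rightarrow> (nat \<Rightarrow> int poly) \<Rightarrow> (nat \<Rightarrow> int poly)" where
  "Omult p f a b = (\<lambda>n. red p n f (a n * b n))"

definition Oone :: "nat \<Rightarrow> int poly \<Rightarrow> (nat \<Rightarrow> int poly)" where
  "Oone p f = (\<lambda>n. red p n f 1)"

definition Ozero :: "nat \<Rightarrow> int poly" where
  "Ozero = (\<lambda>n. 0)"

definition Ounits :: "nat \<Rightarrow> int poly \<Rightarrow> (nat \<Rightarrow> int poly) set" where
  "Ounits p f = {a \<in> Ocarr p f. \<exists>b \<in> Ocarr p f. Omult p f a b = Oone p f}"

text \<open>Z_p[x]/(f) is the ring of integers of a finite extension of Q_p iff it is a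
discrete valuation ring: a domain whose non-units form a principal ideal.\<close>

definition is_local_int_ring :: "nat \<Rightarrow> int poly \<Rightarrow> bool" where
  "is_local_int_ring p f \<longleftrightarrow>
     lead_coeff f = 1 \<and> degree f \<ge> 1 \<and>
     (\<forall>a \<in> Ocarr p f. \<forall>b \<in> Ocarr p f. Omult p f a b = Ozero \<longrightarrow> a = Ozero \<or> b = Ozero) \<and>
     (\<exists>\<pi> \<in> Ocarr p f. \<forall>a \<in> Ocarr p f.
        a \<notin> Ounits p f \<longleftrightarrow> (\<exists>b \<in> Ocarr p f. a = Omult p f \<pi> b))"

text \<open>Z_p itself is the case f = x.\<close>

abbreviation Zp :: "nat \<Rightarrow> (nat \<Rightarrow> int poly) set" where
  "Zp p \<equiv> Ocarr p [:0, 1:]"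

text \<open>A product of split tori, restricted from the O_{F_v} (v | p) to Z_p, has Z_p-points
a finite product of groups O_{F_v}^times; fs lists the corresponding rings
(one entry for each G_m factor, so repetitions encode the ranks).\<close>

definition Tzero :: "nat \<Rightarrow> int poly list \<Rightarrow> (nat \<Rightarrow> nat \<Rightarrow> int poly) set" where
  "Tzero p fs = {t. (\<forall>i < length fs. t i \<in> Ounits p (fs ! i)) \<and>
                     (\<forall>i \<ge> length fs. t i = Ozero)}"

definition Tmult :: "nat \<Rightarrow> int poly list \<Rightarrow> (nat \<Rightarrow> nat \<Rightarrow> int poly) \<Rightarrow> (nat \<Rightarrow> nat \<Rightarrow> int poly) \<Rightarrow> (nat \<Rightarrow> nat \<Rightarrow> int poly)" where
  "Tmult p fs s t = (\<lambda>i. if i < length fs then Omult p (fs ! i) (s i) (t i) else Ozero)"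

definition Tker :: "nat \<Rightarrow> int poly list \<Rightarrow> nat \<Rightarrow> (nat \<Rightarrow> nat \<Rightarrow> int poly) set" where
  "Tker p fs k = {t \<in> Tzero p fs. \<forall>i < length fs. t i k = Oone p (fs ! i) k}"

definition eps :: "nat \<Rightarrow> nat" where
  "eps p = (if p = 2 then 2 else 1)"

definition is_na_norm :: "('r::comm_ring_1 \<Rightarrow> real) \<Rightarrow> bool" where
  "is_na_norm N \<longleftrightarrow>
     (\<forall>x. 0 \<le> N x) \<and> (\<forall>x. N x = 0 \<longleftrightarrow> x = 0) \<and>
     (\<forall>x y. N (x + y) \<le> max (N x) (N y)) \<and> (\<forall>x. N (- x) = N x) \<and>
     (\<forall>x y. N (x * y) \<le> N x * N y) \<and> N 1 = 1"

definition norm_complete :: "('r::comm_ring_1 \<Rightarrow> real) \<Rightarrow> bool" where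
  "norm_complete N \<longleftrightarrow>
     (\<forall>X :: nat \<Rightarrow> 'r. (\<forall>e>0. \<exists>M. \<forall>m\<ge>M. \<forall>n\<ge>M. N (X m - X n) < e) \<longrightarrow>
        (\<exists>L. (\<lambda>n. N (X n - L)) \<longlonglongrightarrow> 0))"

definition mult_pseudo_unif :: "('r::comm_ring_1 \<Rightarrow> real) \<Rightarrow> 'r \<Rightarrow> bool" where
  "mult_pseudo_unif N w \<longleftrightarrow> (\<exists>u. w * u = 1) \<and> N w < 1 \<and> (\<forall>s. N (w * s) = N w * N s)"

text \<open>phi : Z_p \<rightarrow> R is a ring map with |phi x| \<le> |x|_p, i.e. |phi x| \<le> p^-n whenever
x \<in> p^n Z_p (i.e. x n = 0).\<close>

definition zp_alg_map :: "nat \<Rightarrow> ('r::comm_ring_1 \<Rightarrow> real) \<Rightarrow> ((nat \<Rightarrow> int poly) \<Rightarrow> 'r) \<Rightarrow> bool" where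
  "zp_alg_map p N \<phi> \<longleftrightarrow>
     \<phi> (Oone p [:0, 1:]) = 1 \<and>
     (\<forall>a \<in> Zp p. \<forall>b \<in> Zp p. \<phi> (Oadd p [:0, 1:] a b) = \<phi> a + \<phi> b) \<and>
     (\<forall>a \<in> Zp p. \<forall>b \<in> Zp p. \<phi> (Omult p [:0, 1:] a b) = \<phi> a * \<phi> b) \<and>
     (\<forall>a \<in> Zp p. \<forall>n. a n = 0 \<longrightarrow> N (\<phi> a) \<le> (1 / real p) ^ n)"

definition banach_tate_zp :: "nat \<Rightarrow> ('r::comm_ring_1 \<Rightarrow> real) \<Rightarrow> ((nat \<Rightarrow> int poly) \<Rightarrow> 'r) \<Rightarrow> bool" where
  "banach_tate_zp p N \<phi> \<longleftrightarrow> is_na_norm N \<and> norm_complete N \<and>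
     (\<exists>w. mult_pseudo_unif N w) \<and> zp_alg_map p N \<phi>"

definition bounded_equiv :: "('r \<Rightarrow> real) \<Rightarrow> ('r \<Rightarrow> real) \<Rightarrow> bool" where
  "bounded_equiv N1 N2 \<longleftrightarrow> (\<exists>C1>0. \<exists>C2>0. \<forall>r. C1 * N1 r \<le> N2 r \<and> N2 r \<le> C2 * N1 r)"

definition noetherian_ring :: "'r::comm_ring_1 itself \<Rightarrow> bool" where
  "noetherian_ring _ \<longleftrightarrow>
     (\<forall>I :: 'r set. (0 \<in> I \<and> (\<forall>x\<in>I. \<forall>y\<in>I. x + y \<in> I) \<and> (\<forall>r. \<forall>x\<in>I. r * x \<in> I)) \<longrightarrow>
        (\<exists>F. finite F \<and> F \<subseteq> I \<and> I = {\<Sum>x\<in>F. c x * x | c. True}))"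

definition cont_character :: "nat \<Rightarrow> int poly list \<Rightarrow> ('r::comm_ring_1 \<Rightarrow> real) \<Rightarrow> ((nat \<Rightarrow> nat \<Rightarrow> int poly) \<Rightarrow> 'r) \<Rightarrow> bool" where
  "cont_character p fs N \<kappa> \<longleftrightarrow>
     (\<forall>t \<in> Tzero p fs. \<exists>u. \<kappa> t * u = 1) \<and>
     (\<forall>s \<in> Tzero p fs. \<forall>t \<in> Tzero p fs. \<kappa> (Tmult p fs s t) = \<kappa> s * \<kappa> t) \<and>
     (\<forall>t \<in> Tzero p fs. \<forall>e>0. \<exists>n. \<forall>s \<in> Tzero p fs.
         (\<forall>i < length fs. s i n = t i n) \<longrightarrow> N (\<kappa> s - \<kappa> t) < e)"

end

theory Submission
  imports Defs "HOL-Computational_Algebra.Primes"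
begin

text \<open>The new norm is obtained from the given one by two renormings, each bounded-equivalent to
  it (so s = 1 works) and keeping the pseudo-uniformizer multiplicative.  Continuity and
  finiteness of T_0 modulo p^n make \<kappa>(T_0) bounded; the supremum of the norms of \<kappa>(t) y,
  followed by the associated operator norm, then makes \<kappa>(T_0) power-bounded.  Modulo a
  sufficiently high level, T_eps has finitely many classes, so \<kappa>(t) - 1 is controlled by
  finitely many elements g = \<kappa>(r) - 1.  Each g is topologically nilpotent: r^(p^n) lies deep in
  the filtration, so \<kappa>(r)^(p^n) is close to 1, and raising to the p-th power is additive
  modulo p, where p has norm at most 1/p.  Weighting the powers g^j by c^j for some c > 1 and
  renorming once more gives g norm < 1.\<close>

section \<open>Reduction modulo (f, p^n)\<close>

definition red_ideal :: "nat \<Rightarrow> nat \<Rightarrow> int poly \<Rightarrow> int poly set" where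
  "red_ideal p n f = {f * q + smult (int p ^ n) z | q z. True}"

definition monic_nonconst :: "int poly \<Rightarrow> bool" where
  "monic_nonconst f \<longleftrightarrow> lead_coeff f = 1 \<and> degree f \<ge> 1"

lemma monic_nonconst_nonzero: "monic_nonconst f \<Longrightarrow> f \<noteq> 0"
  unfolding monic_nonconst_def by auto

lemma red_ideal_add:
  "a \<in> red_ideal p n f \<Longrightarrow> b \<in> red_ideal p n f \<Longrightarrow> a + b \<in> red_ideal p n f"
proof -
  assume "a \<in> red_ideal p n f" "b \<in> red_ideal p n f"
  then obtain q z q' z' where "a = f * q + smult (int p ^ n) z" "b = f * q' + smult (int p ^ n) z'"
    unfolding red_ideal_def by blast
  then have "a + b = f * (q + q') + smult (int p ^ n) (z + z')"
    by (simp add: distrib_left smult_add_right)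
  then show ?thesis unfolding red_ideal_def by blast
qed

lemma red_ideal_mult_left: "a \<in> red_ideal p n f \<Longrightarrow> c * a \<in> red_ideal p n f"
proof -
  assume "a \<in> red_ideal p n f"
  then obtain q z where "a = f * q + smult (int p ^ n) z"
    unfolding red_ideal_def by blast
  then have "c * a = f * (c * q) + smult (int p ^ n) (c * z)"
    by (simp add: distrib_left mult.left_commute)
  then show ?thesis unfolding red_ideal_def by blast
qed

lemma red_ideal_uminus: "a \<in> red_ideal p n f \<Longrightarrow> - a \<in> red_ideal p n f"
  using red_ideal_mult_left[of a p n f "- 1"] by simp

lemma red_ideal_diff:
  "a \<in> red_ideal p n f \<Longrightarrow> b \<in> red_ideal p n f \<Longrightarrow> a - b \<in> red_ideal p n f"
  using red_ideal_add[of a p n f "- b"] red_ideal_uminus[of b p n f] by simp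

lemma red_ideal_sum:
  "(\<And>i. i \<in> A \<Longrightarrow> a i \<in> red_ideal p n f) \<Longrightarrow> (\<Sum>i\<in>A. a i) \<in> red_ideal p n f"
proof (induction A rule: infinite_finite_induct)
  case (infinite A)
  show ?case using infinite.hyps unfolding red_ideal_def by (auto intro!: exI[of _ 0])
next
  case empty
  show ?case unfolding red_ideal_def by (auto intro!: exI[of _ 0])
qed (simp add: red_ideal_add)

lemma mult_in_red_ideal: "f * q \<in> red_ideal p n f"
  unfolding red_ideal_def by (rule CollectI, rule exI[of _ q], rule exI[of _ 0]) simp

lemma red_ideal_antimono: "n \<le> m \<Longrightarrow> red_ideal p m f \<subseteq> red_ideal p n f"
proof
  fix a assume "n \<le> m" "a \<in> red_ideal p m f"
  then obtain q z where a: "a = f * q + smult (int p ^ m) z" unfolding red_ideal_def by blast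
  have "a = f * q + smult (int p ^ n) (smult (int p ^ (m - n)) z)"
    using \<open>n \<le> m\<close> by (simp add: a power_add[symmetric])
  then show "a \<in> red_ideal p n f" unfolding red_ideal_def by blast
qed

lemma red_ideal_mult:
  assumes "a \<in> red_ideal p k f" and "b \<in> red_ideal p l f"
  shows "a * b \<in> red_ideal p (k + l) f"
proof -
  obtain q z q' z' where a: "a = f * q + smult (int p ^ k) z" and b: "b = f * q' + smult (int p ^ l) z'"
    using assms unfolding red_ideal_def by blast
  have "a * b = f * (q * b + smult (int p ^ k) z * q') + smult (int p ^ (k + l)) (z * z')"
    unfolding a b by (simp add: algebra_simps power_add)
  then show ?thesis unfolding red_ideal_def by blast
qed

lemma of_nat_mult_red_ideal:
  "a \<in> red_ideal p k f \<Longrightarrow> of_nat p * a \<in> red_ideal p (Suc k) f"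
proof -
  assume "a \<in> red_ideal p k f"
  then obtain q z where a: "a = f * q + smult (int p ^ k) z" unfolding red_ideal_def by blast
  have "of_nat p * a = f * (of_nat p * q) + smult (int p ^ Suc k) z"
    unfolding a by (simp add: algebra_simps of_nat_poly)
  then show ?thesis unfolding red_ideal_def by blast
qed

lemma eq_0_if_degree_mult_less:
  fixes f q :: "'a::idom poly"
  assumes "f \<noteq> 0" and "degree (f * q) < degree f"
  shows "q = 0"
  using assms degree_mult_eq[of f q] by (cases "q = 0") auto

lemma pseudo_mod_monic:
  assumes "monic_nonconst f"
  obtains q r where "g = f * q + r" and "degree r < degree f" and "r = pseudo_mod g f"
proof -
  have f0: "f \<noteq> 0" using monic_nonconst_nonzero[OF assms] .
  obtain q r where qr: "pseudo_divmod g f = (q, r)" by (cases "pseudo_divmod g f") auto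
  have "r = pseudo_mod g f" unfolding pseudo_mod_def qr by simp
  moreover from pseudo_divmod[OF f0 qr] assms have "g = f * q + r" and "r = 0 \<or> degree r < degree f"
    unfolding monic_nonconst_def by auto
  moreover have "degree r < degree f"
    using \<open>r = 0 \<or> degree r < degree f\<close> assms unfolding monic_nonconst_def by auto
  ultimately show ?thesis using that by blast
qed

lemma pseudo_mod_monic_small:
  assumes "monic_nonconst f" and "degree g < degree f"
  shows "pseudo_mod g f = g"
proof -
  obtain q r where q: "g = f * q + r" and d: "degree r < degree f" and r: "r = pseudo_mod g f"
    using pseudo_mod_monic[OF assms(1)] .
  have "f * q = g - r" using q by simp
  then have "degree (f * q) < degree f" using degree_diff_less[OF assms(2) d] by simp
  then have "q = 0" by (rule eq_0_if_degree_mult_less[OF monic_nonconst_nonzero[OF assms(1)]])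
  then have "g = r" using q by simp
  then show ?thesis using r by metis
qed

lemma red_zero: "monic_nonconst f \<Longrightarrow> red p n f 0 = 0"
  unfolding red_def using pseudo_mod_monic_small[of f 0] unfolding monic_nonconst_def by simp

lemma diff_red_in_red_ideal:
  assumes "monic_nonconst f"
  shows "g - red p n f g \<in> red_ideal p n f"
proof -
  obtain q r where q: "g = f * q + r" and r: "r = pseudo_mod g f"
    using pseudo_mod_monic[OF assms] .
  have "r - red p n f g = smult (int p ^ n) (map_poly (\<lambda>c. c div (int p ^ n)) r)"
    unfolding red_def r[symmetric]
    by (rule poly_eqI) (simp add: coeff_map_poly minus_mod_eq_mult_div[symmetric])
  then have "g - red p n f g = f * q + smult (int p ^ n) (map_poly (\<lambda>c. c div (int p ^ n)) r)"
    using q by (simp add: algebra_simps)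
  then show ?thesis unfolding red_ideal_def by blast
qed

text \<open>Both reductions have degree below that of f; writing their difference as
  f q + p^n (f q' + z) with degree z < degree f forces the f-multiple to vanish, so the
  two reductions differ by p^n z and their coefficients agree mod p^n.\<close>

lemma red_eq_if_diff_in_red_ideal:
  assumes f: "monic_nonconst f" and gh: "g - h \<in> red_ideal p n f"
  shows "red p n f g = red p n f h"
proof -
  let ?P = "int p ^ n"
  obtain qg rg where qg: "g = f * qg + rg" and dg: "degree rg < degree f" and rg: "rg = pseudo_mod g f"
    using pseudo_mod_monic[OF f] .
  obtain qh rh where qh: "h = f * qh + rh" and dh: "degree rh < degree f" and rh: "rh = pseudo_mod h f"
    using pseudo_mod_monic[OF f] .
  have "rg - rh = (g - h) - f * (qg - qh)" using qg qh by (simp add: algebra_simps)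
  then have "rg - rh \<in> red_ideal p n f"
    using red_ideal_diff[OF gh mult_in_red_ideal] by simp
  then obtain q z where dz: "rg - rh = f * q + smult ?P z" unfolding red_ideal_def by blast
  obtain qz z0 where qz: "z = f * qz + z0" and dz0: "degree z0 < degree f"
    using pseudo_mod_monic[OF f] .
  have eq: "(rg - rh) - smult ?P z0 = f * (q + smult ?P qz)"
    unfolding dz qz by (simp add: smult_add_right distrib_left)
  have "degree ((rg - rh) - smult ?P z0) < degree f"
    using dg dh dz0 degree_smult_le[of ?P z0] by (meson degree_diff_less le_less_trans)
  then have "q + smult ?P qz = 0"
    unfolding eq by (rule eq_0_if_degree_mult_less[OF monic_nonconst_nonzero[OF f]])
  then have d: "rg - rh = smult ?P z0" using eq by simp
  show ?thesis unfolding red_def rg[symmetric] rh[symmetric]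
  proof (rule poly_eqI)
    fix i
    have "coeff rg i - coeff rh i = ?P * coeff z0 i"
      using arg_cong[OF d, of "\<lambda>x. coeff x i"] by simp
    then have "coeff rg i mod ?P = coeff rh i mod ?P" by (simp add: mod_eq_dvd_iff)
    then show "coeff (map_poly (\<lambda>c. c mod ?P) rg) i = coeff (map_poly (\<lambda>c. c mod ?P) rh) i"
      by (simp add: coeff_map_poly)
  qed
qed

lemma red_eq_iff:
  assumes "monic_nonconst f"
  shows "red p n f g = red p n f h \<longleftrightarrow> g - h \<in> red_ideal p n f"
proof
  assume "red p n f g = red p n f h"
  then have "g - h = (g - red p n f g) - (h - red p n f h)" by simp
  also have "\<dots> \<in> red_ideal p n f"
    by (intro red_ideal_diff diff_red_in_red_ideal assms)
  finally show "g - h \<in> red_ideal p n f" .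
qed (rule red_eq_if_diff_in_red_ideal[OF assms])

lemma red_red_le:
  assumes "monic_nonconst f" and "k \<le> n"
  shows "red p k f (red p n f g) = red p k f g"
proof -
  have "g - red p n f g \<in> red_ideal p k f"
    using diff_red_in_red_ideal[OF assms(1)] red_ideal_antimono[OF assms(2)] by blast
  then have "red p n f g - g \<in> red_ideal p k f"
    using red_ideal_uminus by fastforce
  then show ?thesis using red_eq_iff[OF assms(1)] by blast
qed

lemma red_red: "monic_nonconst f \<Longrightarrow> red p n f (red p n f g) = red p n f g"
  using red_red_le by blast

lemma red_mult_left:
  assumes "monic_nonconst f"
  shows "red p n f (red p n f a * b) = red p n f (a * b)"
proof -
  have "- b * (a - red p n f a) \<in> red_ideal p n f"
    using red_ideal_mult_left diff_red_in_red_ideal[OF assms] by blast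
  moreover have "- b * (a - red p n f a) = red p n f a * b - a * b" by (simp add: algebra_simps)
  ultimately show ?thesis using red_eq_iff[OF assms] by simp
qed

lemma red_mult_right: "monic_nonconst f \<Longrightarrow> red p n f (a * red p n f b) = red p n f (a * b)"
  using red_mult_left[of f p n b a] by (simp add: mult.commute)

lemma red_add_left:
  assumes "monic_nonconst f"
  shows "red p n f (red p n f a + b) = red p n f (a + b)"
proof -
  have "red p n f a + b - (a + b) \<in> red_ideal p n f"
    using red_ideal_uminus[OF diff_red_in_red_ideal[OF assms]] by simp
  then show ?thesis using red_eq_iff[OF assms] by blast
qed

lemma red_add_right: "monic_nonconst f \<Longrightarrow> red p n f (a + red p n f b) = red p n f (a + b)"
  using red_add_left[of f p n b a] by (simp add: add.commute)

lemma one_add_pow_minus_one_in_red_ideal: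
  "y \<in> red_ideal p k f \<Longrightarrow> (1 + y) ^ i - 1 \<in> red_ideal p k f"
proof -
  assume y: "y \<in> red_ideal p k f"
  have "(1 + y) ^ i - 1 ^ i = ((1 + y) - 1) * (\<Sum>j<i. 1 ^ (i - Suc j) * (1 + y) ^ j)"
    by (rule power_diff_sumr2)
  then have "(1 + y) ^ i - 1 = (\<Sum>j<i. (1 + y) ^ j) * y" by (simp add: mult.commute)
  then show ?thesis using red_ideal_mult_left[OF y] by simp
qed

text \<open>(1 + y)^p - 1 = y (\<Sum>j<p. (1 + y)^j - 1) + p y, and both summands lie one level
  deeper than y once k \<ge> 1.\<close>

lemma one_add_pow_prime_minus_one_in_red_ideal:
  assumes y: "y \<in> red_ideal p k f" and k: "k \<ge> 1"
  shows "(1 + y) ^ p - 1 \<in> red_ideal p (Suc k) f"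
proof -
  have "(1 + y) ^ p - 1 ^ p = ((1 + y) - 1) * (\<Sum>j<p. 1 ^ (p - Suc j) * (1 + y) ^ j)"
    by (rule power_diff_sumr2)
  also have "(\<Sum>j<p. 1 ^ (p - Suc j) * (1 + y) ^ j) = (\<Sum>j<p. ((1 + y) ^ j - 1)) + of_nat p"
    by (simp add: sum_subtractf)
  finally have e: "(1 + y) ^ p - 1 = y * (\<Sum>j<p. ((1 + y) ^ j - 1)) + of_nat p * y"
    by (simp add: algebra_simps)
  have "(\<Sum>j<p. ((1 + y) ^ j - 1)) \<in> red_ideal p k f"
    by (intro red_ideal_sum one_add_pow_minus_one_in_red_ideal y)
  then have "y * (\<Sum>j<p. ((1 + y) ^ j - 1)) \<in> red_ideal p (Suc k) f"
    using red_ideal_mult[OF y] red_ideal_antimono[of "Suc k" "k + k"] k by fastforce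
  then show ?thesis unfolding e using red_ideal_add of_nat_mult_red_ideal[OF y] by blast
qed

lemma one_add_pow_prime_power_minus_one_in_red_ideal:
  assumes y: "y \<in> red_ideal p k f" and k: "k \<ge> 1"
  shows "(1 + y) ^ (p ^ m) - 1 \<in> red_ideal p (k + m) f"
proof (induction m)
  case 0
  show ?case using y by simp
next
  case (Suc m)
  have "(1 + y) ^ (p ^ Suc m) = (1 + ((1 + y) ^ (p ^ m) - 1)) ^ p"
    by (simp add: power_mult[symmetric] mult.commute)
  then show ?case using one_add_pow_prime_minus_one_in_red_ideal[OF Suc] k by simp
qed

lemma finite_int_polys_bounded:
  "finite {g :: int poly. degree g < d \<and> (\<forall>i. coeff g i \<in> {0..<P})}"
  (is "finite ?S")
proof (rule finite_imageD)
  have "(\<lambda>g. map (coeff g) [0..<d]) ` ?S \<subseteq> {xs. set xs \<subseteq> {0..<P} \<and> length xs = d}" by auto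
  then show "finite ((\<lambda>g. map (coeff g) [0..<d]) ` ?S)"
    by (rule finite_subset) (simp add: finite_lists_length_eq)
  show "inj_on (\<lambda>g. map (coeff g) [0..<d]) ?S"
  proof (rule inj_onI, rule poly_eqI)
    fix g h i
    assume "g \<in> ?S" "h \<in> ?S" and e: "map (coeff g) [0..<d] = map (coeff h) [0..<d]"
    show "coeff g i = coeff h i"
    proof (cases "i < d")
      case True
      then show ?thesis using e by simp
    next
      case False
      then show ?thesis using \<open>g \<in> ?S\<close> \<open>h \<in> ?S\<close> by (simp add: coeff_eq_0)
    qed
  qed
qed

lemma red_fixed_finite:
  assumes f: "monic_nonconst f" and p: "p > 0"
  shows "finite {g. red p n f g = g}"
proof (rule finite_subset[OF _ finite_int_polys_bounded])
  show "{g. red p n f g = g} \<subseteq> {g. degree g < degree f \<and> (\<forall>i. coeff g i \<in> {0..<int p ^ n})}"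
  proof safe
    fix g assume "red p n f g = g"
    then have g: "g = map_poly (\<lambda>c. c mod int p ^ n) (pseudo_mod g f)" unfolding red_def by simp
    obtain q r :: "int poly" where "degree r < degree f" "r = pseudo_mod g f"
      using pseudo_mod_monic[OF f] .
    then show "degree g < degree f" using g map_poly_degree_leq[of "\<lambda>c. c mod int p ^ n" r] by simp
    show "coeff g i \<in> {0..<int p ^ n}" for i using p by (subst g) (simp add: coeff_map_poly)
  qed
qed

lemma Ocarr_red_le:
  assumes f: "monic_nonconst f" and a: "a \<in> Ocarr p f" and "k \<le> n"
  shows "red p k f (a n) = a k"
  using \<open>k \<le> n\<close>
proof (induction n rule: dec_induct)
  case base
  show ?case using a unfolding Ocarr_def by blast
next
  case (step n)
  have "red p k f (a (Suc n)) = red p k f (red p n f (a (Suc n)))"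
    using red_red_le[OF f step.hyps(1)] by simp
  also have "\<dots> = red p k f (a n)" using a unfolding Ocarr_def by simp
  also have "\<dots> = a k" by (rule step.IH)
  finally show ?case .
qed

lemma Oone_in_Ocarr: "monic_nonconst f \<Longrightarrow> Oone p f \<in> Ocarr p f"
  unfolding Ocarr_def Oone_def using red_red_le[of f n "Suc n" p 1 for n] red_red by auto

lemma Omult_in_Ocarr:
  assumes f: "monic_nonconst f" and a: "a \<in> Ocarr p f" and b: "b \<in> Ocarr p f"
  shows "Omult p f a b \<in> Ocarr p f"
proof -
  have "red p n f (red p (Suc n) f (a (Suc n) * b (Suc n))) = red p n f (a n * b n)" for n
  proof -
    have "red p n f (red p (Suc n) f (a (Suc n) * b (Suc n))) = red p n f (a (Suc n) * b (Suc n))"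
      using red_red_le[OF f, of n "Suc n"] by simp
    also have "\<dots> = red p n f (red p n f (a (Suc n)) * red p n f (b (Suc n)))"
      using red_mult_left[OF f] red_mult_right[OF f] by metis
    also have "\<dots> = red p n f (a n * b n)" using a b unfolding Ocarr_def by auto
    finally show ?thesis .
  qed
  then show ?thesis unfolding Ocarr_def Omult_def using red_red[OF f] by auto
qed

lemma Omult_commute: "Omult p f a b = Omult p f b a"
  unfolding Omult_def by (simp add: mult.commute)

lemma Omult_assoc:
  "monic_nonconst f \<Longrightarrow> Omult p f (Omult p f a b) c = Omult p f a (Omult p f b c)"
  unfolding Omult_def using red_mult_left red_mult_right by (simp add: mult.assoc)

lemma Omult_Oone_left: "monic_nonconst f \<Longrightarrow> a \<in> Ocarr p f \<Longrightarrow> Omult p f (Oone p f) a = a"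
  unfolding Omult_def Oone_def using red_mult_left[of f p _ 1] unfolding Ocarr_def by auto

lemma Oone_in_Ounits: "monic_nonconst f \<Longrightarrow> Oone p f \<in> Ounits p f"
  unfolding Ounits_def using Oone_in_Ocarr Omult_Oone_left by blast

lemma Ounits_inverse:
  assumes "a \<in> Ounits p f"
  shows "\<exists>b \<in> Ounits p f. Omult p f a b = Oone p f"
proof -
  obtain b where b: "b \<in> Ocarr p f" "Omult p f a b = Oone p f" and "a \<in> Ocarr p f"
    using assms unfolding Ounits_def by blast
  then have "b \<in> Ounits p f" unfolding Ounits_def using Omult_commute[of p f b a] by auto
  then show ?thesis using b by blast
qed

lemma Omult_in_Ounits:
  assumes f: "monic_nonconst f" and a: "a \<in> Ounits p f" and b: "b \<in> Ounits p f"
  shows "Omult p f a b \<in> Ounits p f"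
proof -
  obtain a' where a': "a' \<in> Ocarr p f" "Omult p f a a' = Oone p f" using a unfolding Ounits_def by blast
  obtain b' where b': "b' \<in> Ocarr p f" "Omult p f b b' = Oone p f" using b unfolding Ounits_def by blast
  have "Omult p f (Omult p f a b) (Omult p f a' b') = Omult p f (Omult p f a a') (Omult p f b b')"
    using Omult_assoc[OF f] Omult_commute by metis
  also have "\<dots> = Oone p f" using a' b' Omult_Oone_left[OF f Oone_in_Ocarr[OF f]] by simp
  finally show ?thesis
    using a b a' b' Omult_in_Ocarr[OF f] unfolding Ounits_def by blast
qed

definition Tone :: "nat \<Rightarrow> int poly list \<Rightarrow> nat \<Rightarrow> nat \<Rightarrow> int poly" where
  "Tone p fs = (\<lambda>i. if i < length fs then Oone p (fs ! i) else Ozero)"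

definition Tpow :: "nat \<Rightarrow> int poly list \<Rightarrow> (nat \<Rightarrow> nat \<Rightarrow> int poly) \<Rightarrow> nat \<Rightarrow> nat \<Rightarrow> nat \<Rightarrow> int poly" where
  "Tpow p fs t k = (Tmult p fs t ^^ k) (Tone p fs)"

definition Tred :: "nat \<Rightarrow> int poly list \<Rightarrow> (nat \<Rightarrow> nat \<Rightarrow> int poly) \<Rightarrow> int poly list" where
  "Tred n fs t = map (\<lambda>i. t i n) [0..<length fs]"

lemma Tred_eq_iff: "Tred n fs s = Tred n fs t \<longleftrightarrow> (\<forall>i < length fs. s i n = t i n)"
  unfolding Tred_def by auto

lemma Tzero_nth_Ocarr: "t \<in> Tzero p fs \<Longrightarrow> i < length fs \<Longrightarrow> t i \<in> Ocarr p (fs ! i)"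
  unfolding Tzero_def Ounits_def by auto

lemma Tone_in_Tzero: "\<forall>f \<in> set fs. monic_nonconst f \<Longrightarrow> Tone p fs \<in> Tzero p fs"
  unfolding Tzero_def Tone_def using Oone_in_Ounits by auto

lemma Tmult_in_Tzero:
  "\<forall>f \<in> set fs. monic_nonconst f \<Longrightarrow> s \<in> Tzero p fs \<Longrightarrow> t \<in> Tzero p fs \<Longrightarrow> Tmult p fs s t \<in> Tzero p fs"
  unfolding Tzero_def Tmult_def using Omult_in_Ounits by auto

lemma Tmult_assoc:
  "\<forall>f \<in> set fs. monic_nonconst f \<Longrightarrow> Tmult p fs (Tmult p fs a b) c = Tmult p fs a (Tmult p fs b c)"
  unfolding Tmult_def using Omult_assoc by (auto simp: fun_eq_iff)

lemma Tmult_Tone_left: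
  assumes fs: "\<forall>f \<in> set fs. monic_nonconst f" and t: "t \<in> Tzero p fs"
  shows "Tmult p fs (Tone p fs) t = t"
proof
  fix i
  show "Tmult p fs (Tone p fs) t i = t i"
  proof (cases "i < length fs")
    case True
    then show ?thesis
      using Omult_Oone_left Tzero_nth_Ocarr[OF t] fs unfolding Tmult_def Tone_def by simp
  next
    case False
    then show ?thesis using t unfolding Tmult_def Tzero_def by auto
  qed
qed

lemma Tzero_inverse:
  assumes t: "t \<in> Tzero p fs"
  shows "\<exists>b \<in> Tzero p fs. Tmult p fs t b = Tone p fs"
proof -
  have "\<forall>i. \<exists>c. i < length fs \<longrightarrow> c \<in> Ounits p (fs ! i) \<and> Omult p (fs ! i) (t i) c = Oone p (fs ! i)"
    using Ounits_inverse t unfolding Tzero_def by blast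
  then obtain c where c: "\<And>i. i < length fs \<Longrightarrow>
      c i \<in> Ounits p (fs ! i) \<and> Omult p (fs ! i) (t i) (c i) = Oone p (fs ! i)"
    by metis
  define b where "b = (\<lambda>i. if i < length fs then c i else Ozero)"
  have "b \<in> Tzero p fs" using c unfolding Tzero_def b_def by auto
  moreover have "Tmult p fs t b = Tone p fs"
    using c unfolding Tmult_def Tone_def b_def by auto
  ultimately show ?thesis by blast
qed

lemma Tmult_level: "i < length fs \<Longrightarrow> Tmult p fs s t i n = red p n (fs ! i) (s i n * t i n)"
  unfolding Tmult_def Omult_def by simp

lemma Tpow_Suc: "Tpow p fs t (Suc k) = Tmult p fs t (Tpow p fs t k)"
  unfolding Tpow_def by simp

lemma Tpow_in_Tzero:
  "\<forall>f \<in> set fs. monic_nonconst f \<Longrightarrow> t \<in> Tzero p fs \<Longrightarrow> Tpow p fs t k \<in> Tzero p fs"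
  by (induction k) (simp_all add: Tpow_Suc Tmult_in_Tzero Tpow_def Tone_in_Tzero)

lemma Tpow_level:
  assumes "\<forall>f \<in> set fs. monic_nonconst f" and i: "i < length fs"
  shows "Tpow p fs t k i n = red p n (fs ! i) (t i n ^ k)"
proof (induction k)
  case 0
  show ?case by (simp add: Tpow_def Tone_def Oone_def i)
next
  case (Suc k)
  then show ?case
    using red_mult_right assms by (simp add: Tpow_Suc Tmult_level[OF i])
qed

lemma Tker_Tred:
  assumes fs: "\<forall>f \<in> set fs. monic_nonconst f" and t: "t \<in> Tker p fs k" and "n \<le> k"
  shows "Tred n fs t = Tred n fs (Tone p fs)"
  unfolding Tred_eq_iff
proof (intro allI impI)
  fix i assume i: "i < length fs"
  have f: "monic_nonconst (fs ! i)" using fs i by simp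
  have t0: "t \<in> Tzero p fs" using t unfolding Tker_def by blast
  have "t i n = red p n (fs ! i) (t i k)" using Ocarr_red_le[OF f Tzero_nth_Ocarr[OF t0 i] \<open>n \<le> k\<close>] by simp
  also have "\<dots> = red p n (fs ! i) (red p k (fs ! i) 1)" using t i unfolding Tker_def Oone_def by auto
  also have "\<dots> = Tone p fs i n" using red_red_le[OF f \<open>n \<le> k\<close>] i unfolding Tone_def Oone_def by simp
  finally show "t i n = Tone p fs i n" .
qed

lemma Tpow_prime_power_in_Tker:
  assumes fs: "\<forall>f \<in> set fs. monic_nonconst f" and t: "t \<in> Tker p fs k" and k: "k \<ge> 1"
  shows "Tpow p fs t (p ^ m) \<in> Tker p fs (k + m)"
proof -
  have t0: "t \<in> Tzero p fs" using t unfolding Tker_def by auto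
  have "Tpow p fs t (p ^ m) i (k + m) = Oone p (fs ! i) (k + m)" if i: "i < length fs" for i
  proof -
    let ?f = "fs ! i"
    have f: "monic_nonconst ?f" using fs i by simp
    have "red p k ?f (t i (k + m)) = t i k" using Ocarr_red_le[OF f Tzero_nth_Ocarr[OF t0 i]] by simp
    also have "\<dots> = red p k ?f 1" using t i unfolding Tker_def Oone_def by auto
    finally have "t i (k + m) - 1 \<in> red_ideal p k ?f" using red_eq_iff[OF f] by blast
    then have "(1 + (t i (k + m) - 1)) ^ (p ^ m) - 1 \<in> red_ideal p (k + m) ?f"
      using one_add_pow_prime_power_minus_one_in_red_ideal k by blast
    then have "red p (k + m) ?f (t i (k + m) ^ (p ^ m)) = red p (k + m) ?f 1"
      using red_eq_iff[OF f] by simp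
    then show ?thesis using Tpow_level[OF fs i] unfolding Oone_def by simp
  qed
  then show ?thesis unfolding Tker_def using Tpow_in_Tzero[OF fs t0] by auto
qed

lemma finite_Tred_Tzero:
  assumes fs: "\<forall>f \<in> set fs. monic_nonconst f" and p: "p > 0"
  shows "finite (Tred n fs ` Tzero p fs)"
proof -
  define U where "U = (\<Union>i<length fs. {g. red p n (fs ! i) g = g})"
  have "finite U" unfolding U_def using red_fixed_finite fs p by auto
  have "Tred n fs ` Tzero p fs \<subseteq> {xs. set xs \<subseteq> U \<and> length xs = length fs}"
  proof
    fix xs assume "xs \<in> Tred n fs ` Tzero p fs"
    then obtain t where t: "t \<in> Tzero p fs" and xs: "xs = Tred n fs t" by blast
    have "t i n \<in> U" if "i < length fs" for i
      using Tzero_nth_Ocarr[OF t that] that unfolding U_def Ocarr_def by blast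
    then show "xs \<in> {xs. set xs \<subseteq> U \<and> length xs = length fs}" unfolding xs Tred_def by auto
  qed
  then show ?thesis by (rule finite_subset) (simp add: finite_lists_length_eq \<open>finite U\<close>)
qed

lemma Tzero_finite_representatives:
  assumes fs: "\<forall>f \<in> set fs. monic_nonconst f" and p: "p > 0" and A: "A \<subseteq> Tzero p fs"
  obtains R where "R \<subseteq> A" and "finite R" and "\<And>t. t \<in> A \<Longrightarrow> \<exists>r \<in> R. Tred n fs r = Tred n fs t"
proof
  let ?R = "inv_into A (Tred n fs) ` Tred n fs ` A"
  show "?R \<subseteq> A" by (auto intro: inv_into_into)
  show "finite ?R" using finite_subset[OF image_mono[OF A] finite_Tred_Tzero[OF fs p]] by simp
  show "\<exists>r \<in> ?R. Tred n fs r = Tred n fs t" if "t \<in> A" for t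
    using that f_inv_into_f[of "Tred n fs t" "Tred n fs" A] by blast
qed

lemma character_mult:
  "cont_character p fs N \<kappa> \<Longrightarrow> s \<in> Tzero p fs \<Longrightarrow> t \<in> Tzero p fs \<Longrightarrow>
    \<kappa> (Tmult p fs s t) = \<kappa> s * \<kappa> t"
  unfolding cont_character_def by blast

lemma character_Tone:
  assumes fs: "\<forall>f \<in> set fs. monic_nonconst f" and kc: "cont_character p fs N \<kappa>"
  shows "\<kappa> (Tone p fs) = 1"
proof -
  have e: "Tone p fs \<in> Tzero p fs" using Tone_in_Tzero[OF fs] .
  obtain u where u: "\<kappa> (Tone p fs) * u = 1" using kc e unfolding cont_character_def by blast
  have "\<kappa> (Tone p fs) = \<kappa> (Tone p fs) * \<kappa> (Tone p fs)"
    using character_mult[OF kc e e] Tmult_Tone_left[OF fs e] by simp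
  then have "\<kappa> (Tone p fs) * u = \<kappa> (Tone p fs) * \<kappa> (Tone p fs) * u" by simp
  then show ?thesis using u by (simp add: mult.assoc)
qed

lemma character_image_one:
  "\<forall>f \<in> set fs. monic_nonconst f \<Longrightarrow> cont_character p fs N \<kappa> \<Longrightarrow> 1 \<in> \<kappa> ` Tzero p fs"
  using Tone_in_Tzero character_Tone by (metis image_eqI)

lemma character_image_mult:
  assumes "\<forall>f \<in> set fs. monic_nonconst f" and "cont_character p fs N \<kappa>"
    and "x \<in> \<kappa> ` Tzero p fs" and "y \<in> \<kappa> ` Tzero p fs"
  shows "x * y \<in> \<kappa> ` Tzero p fs"
proof -
  obtain s t where "x = \<kappa> s" "y = \<kappa> t" "s \<in> Tzero p fs" "t \<in> Tzero p fs" using assms(3,4) by blast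
  then show ?thesis using character_mult[OF assms(2)] Tmult_in_Tzero[OF assms(1)] by (metis image_eqI)
qed

lemma character_Tpow:
  assumes fs: "\<forall>f \<in> set fs. monic_nonconst f" and kc: "cont_character p fs N \<kappa>"
    and t: "t \<in> Tzero p fs"
  shows "\<kappa> (Tpow p fs t k) = \<kappa> t ^ k"
proof (induction k)
  case 0
  show ?case using character_Tone[OF fs kc] by (simp add: Tpow_def)
next
  case (Suc k)
  then show ?case
    using character_mult[OF kc t Tpow_in_Tzero[OF fs t]] by (simp add: Tpow_Suc)
qed

lemma cont_character_mono:
  "cont_character p fs N \<kappa> \<Longrightarrow> (\<And>y. N' y \<le> N y) \<Longrightarrow> cont_character p fs N' \<kappa>"
  unfolding cont_character_def by (meson le_less_trans)

lemma character_near_one: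
  assumes fs: "\<forall>f \<in> set fs. monic_nonconst f" and kc: "cont_character p fs N \<kappa>"
  obtains n where "\<And>s. s \<in> Tzero p fs \<Longrightarrow> Tred n fs s = Tred n fs (Tone p fs) \<Longrightarrow> N (\<kappa> s - 1) < 1"
proof -
  have "\<exists>n. \<forall>s \<in> Tzero p fs. (\<forall>i < length fs. s i n = Tone p fs i n) \<longrightarrow>
      N (\<kappa> s - \<kappa> (Tone p fs)) < 1"
    using kc Tone_in_Tzero[OF fs] unfolding cont_character_def by simp
  then show ?thesis using that character_Tone[OF fs kc] unfolding Tred_eq_iff by auto
qed

lemma character_factor:
  assumes fs: "\<forall>f \<in> set fs. monic_nonconst f" and kc: "cont_character p fs N \<kappa>"
    and t: "t \<in> Tzero p fs" and r: "r \<in> Tzero p fs" and rt: "Tred n fs r = Tred n fs t"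
  shows "\<exists>s \<in> Tzero p fs. Tred n fs s = Tred n fs (Tone p fs) \<and> \<kappa> t = \<kappa> r * \<kappa> s"
proof -
  obtain b where b: "b \<in> Tzero p fs" "Tmult p fs r b = Tone p fs" using Tzero_inverse[OF r] by blast
  define s where "s = Tmult p fs b t"
  have s: "s \<in> Tzero p fs" unfolding s_def using Tmult_in_Tzero[OF fs b(1) t] .
  have "s i n = Tone p fs i n" if i: "i < length fs" for i
  proof -
    have "s i n = red p n (fs ! i) (r i n * b i n)"
      using rt i unfolding s_def Tmult_level[OF i] Tred_eq_iff by (simp add: mult.commute)
    also have "\<dots> = Tone p fs i n" using b(2) Tmult_level[OF i, of p r b n] by simp
    finally show ?thesis .
  qed
  moreover have "Tmult p fs r s = t"
    unfolding s_def using Tmult_assoc[OF fs, of p r b t] b(2) Tmult_Tone_left[OF fs t] by simp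
  then have "\<kappa> t = \<kappa> r * \<kappa> s" using character_mult[OF kc r s] by simp
  ultimately show ?thesis using s unfolding Tred_eq_iff by blast
qed

definition Zp_of_nat :: "nat \<Rightarrow> nat \<Rightarrow> nat \<Rightarrow> int poly" where
  "Zp_of_nat p k = (\<lambda>n. red p n [:0, 1:] (of_nat k))"

lemma monic_nonconst_X: "monic_nonconst [:0, 1:]"
  unfolding monic_nonconst_def by simp

lemma Zp_of_nat_in_Zp: "Zp_of_nat p k \<in> Zp p"
  unfolding Ocarr_def Zp_of_nat_def using red_red_le[OF monic_nonconst_X] red_red[OF monic_nonconst_X]
  by auto

lemma zp_alg_map_of_nat:
  assumes "zp_alg_map p N \<phi>"
  shows "\<phi> (Zp_of_nat p k) = of_nat k"
proof (induction k)
  case 0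
  have "Oadd p [:0, 1:] (Zp_of_nat p 0) (Zp_of_nat p 0) = Zp_of_nat p 0"
    unfolding Oadd_def Zp_of_nat_def using red_zero[OF monic_nonconst_X] by simp
  then have "\<phi> (Zp_of_nat p 0) = \<phi> (Zp_of_nat p 0) + \<phi> (Zp_of_nat p 0)"
    using assms Zp_of_nat_in_Zp unfolding zp_alg_map_def by metis
  then show ?case by simp
next
  case (Suc k)
  have "Oadd p [:0, 1:] (Zp_of_nat p k) (Oone p [:0, 1:]) = Zp_of_nat p (Suc k)"
    unfolding Oadd_def Zp_of_nat_def Oone_def
    using red_add_left[OF monic_nonconst_X] red_add_right[OF monic_nonconst_X]
    by (simp add: add.commute)
  then have "\<phi> (Zp_of_nat p (Suc k)) = \<phi> (Zp_of_nat p k) + \<phi> (Oone p [:0, 1:])"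
    using assms Zp_of_nat_in_Zp Oone_in_Ocarr[OF monic_nonconst_X] unfolding zp_alg_map_def by metis
  then show ?case using Suc assms unfolding zp_alg_map_def by simp
qed

lemma zp_alg_map_norm_prime:
  assumes "zp_alg_map p N \<phi>"
  shows "N (of_nat p) \<le> 1 / real p"
proof -
  have "of_nat p - 0 = [:0, 1:] * 0 + smult (int p ^ 1) 1" by (simp add: of_nat_poly)
  then have "of_nat p - 0 \<in> red_ideal p 1 [:0, 1:]" unfolding red_ideal_def by blast
  then have "Zp_of_nat p p 1 = 0"
    unfolding Zp_of_nat_def using red_eq_iff[OF monic_nonconst_X] red_zero[OF monic_nonconst_X] by metis
  then have "N (\<phi> (Zp_of_nat p p)) \<le> (1 / real p) ^ 1"
    using assms Zp_of_nat_in_Zp unfolding zp_alg_map_def by blast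
  then show ?thesis using zp_alg_map_of_nat[OF assms] by simp
qed

lemma is_na_normD:
  assumes "is_na_norm N"
  shows "\<And>x. 0 \<le> N x" "\<And>x. N x = 0 \<longleftrightarrow> x = 0" "\<And>x y. N (x + y) \<le> max (N x) (N y)"
    "\<And>x. N (- x) = N x" "\<And>x y. N (x * y) \<le> N x * N y" "N 1 = 1"
  using assms unfolding is_na_norm_def by auto

lemma na_norm_one_neq_zero: "is_na_norm (N :: 'r::comm_ring_1 \<Rightarrow> real) \<Longrightarrow> (1::'r) \<noteq> 0"
  using is_na_normD(2,6) by force

lemma na_norm_pos: "is_na_norm N \<Longrightarrow> x \<noteq> 0 \<Longrightarrow> N x > 0"
  using is_na_normD(1,2) by (metis less_eq_real_def)

lemma na_norm_of_nat_le_1: "is_na_norm N \<Longrightarrow> N (of_nat c) \<le> 1"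
proof (induction c)
  case 0
  then show ?case using is_na_normD(2)[OF 0, of 0] by simp
next
  case (Suc c)
  then have "N (of_nat c + 1) \<le> max (N (of_nat c)) (N 1)" using is_na_normD(3) by blast
  then show ?case using Suc is_na_normD(6)[OF Suc.prems] by (simp add: add.commute)
qed

lemma na_norm_sum_le:
  "is_na_norm N \<Longrightarrow> M \<ge> 0 \<Longrightarrow> (\<And>i. i \<in> A \<Longrightarrow> N (f i) \<le> M) \<Longrightarrow> N (sum f A) \<le> M"
proof (induction A rule: infinite_finite_induct)
  case (infinite A)
  then show ?case using is_na_normD(2)[OF infinite.prems(1), of 0] by simp
next
  case empty
  then show ?case using is_na_normD(2)[OF empty.prems(1), of 0] by simp
next
  case (insert x F)
  have "N (sum f (insert x F)) \<le> max (N (f x)) (N (sum f F))"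
    using insert.hyps is_na_normD(3)[OF insert.prems(1)] by simp
  also have "\<dots> \<le> M" using insert by simp
  finally show ?case .
qed

lemma na_norm_power_le: "is_na_norm N \<Longrightarrow> N (x ^ k) \<le> N x ^ k"
proof (induction k)
  case 0
  then show ?case by (simp add: is_na_normD(6))
next
  case (Suc k)
  have "N (x ^ Suc k) \<le> N x * N (x ^ k)" using is_na_normD(5)[OF Suc.prems] by simp
  also have "\<dots> \<le> N x * N x ^ k" using Suc is_na_normD(1)[OF Suc.prems] by (simp add: mult_left_mono)
  finally show ?case by simp
qed

lemma na_norm_power_le_1: "is_na_norm N \<Longrightarrow> N x \<le> 1 \<Longrightarrow> N (x ^ k) \<le> 1"
  using na_norm_power_le[of N x k] power_le_one[of "N x" k] is_na_normD(1) by fastforce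

lemma na_norm_diff_one_le_1: "is_na_norm N \<Longrightarrow> N x \<le> 1 \<Longrightarrow> N (x - 1) \<le> 1"
  using is_na_normD(3)[of N x "- 1"] is_na_normD(4)[of N 1] is_na_normD(6)[of N] by simp

lemma na_norm_mult_le_1: "is_na_norm N \<Longrightarrow> N x \<le> 1 \<Longrightarrow> N y \<le> 1 \<Longrightarrow> N (x * y) \<le> 1"
  using is_na_normD(1,5)[of N] by (meson mult_le_one order.trans)

lemma na_norm_mult_minus_one_lt_1:
  assumes nn: "is_na_norm N" and x: "N x \<le> 1" "N (x - 1) < 1" and y: "N (y - 1) < 1"
  shows "N (x * y - 1) < 1"
proof -
  note F = is_na_normD[OF nn]
  have "N (x * (y - 1)) \<le> N x * N (y - 1)" by (rule F(5))
  also have "\<dots> \<le> N (y - 1)" using x(1) F(1) by (simp add: mult_left_le_one_le)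
  finally have small: "N (x * (y - 1)) < 1" using y by linarith
  have "x * y - 1 = (x - 1) + x * (y - 1)" by (simp add: algebra_simps)
  then have "N (x * y - 1) \<le> max (N (x - 1)) (N (x * (y - 1)))" by (metis F(3))
  with small x(2) show ?thesis by linarith
qed

lemma na_norm_binomial_prime:
  fixes N :: "'r::comm_ring_1 \<Rightarrow> real"
  assumes nn: "is_na_norm N" and p: "prime p" and y: "N y \<le> 1"
  shows "\<exists>b. y ^ p = ((1 + y) ^ p - 1) + b \<and> N b \<le> N (of_nat p)"
proof -
  note F = is_na_normD[OF nn]
  have p2: "p \<ge> 2" using p by (simp add: prime_ge_2_nat)
  define b where "b = - (\<Sum>k\<in>{1..<p}. of_nat (p choose k) * y ^ k)"
  have "(y + 1) ^ p = (\<Sum>k\<le>p. of_nat (p choose k) * y ^ k)"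
    by (simp add: binomial_ring)
  also have "{..p} = insert 0 (insert p {1..<p})" using p2 by auto
  finally have "(y + 1) ^ p = 1 + (y ^ p + (\<Sum>k\<in>{1..<p}. of_nat (p choose k) * y ^ k))"
    using p2 by simp
  then have "y ^ p = ((1 + y) ^ p - 1) + b" unfolding b_def by (simp add: algebra_simps)
  moreover have "N b \<le> N (of_nat p)"
  proof -
    have "N (of_nat (p choose k) * y ^ k) \<le> N (of_nat p)" if k: "k \<in> {1..<p}" for k
    proof -
      obtain c where c: "p choose k = p * c" using dvd_choose_prime[of k p] k p by auto
      have "N (of_nat (p choose k) * y ^ k) \<le> N (of_nat p) * N (of_nat c * y ^ k)"
        using F(5) unfolding c by (simp add: mult.assoc)
      also have "\<dots> \<le> N (of_nat p)"
        using na_norm_mult_le_1[OF nn na_norm_of_nat_le_1[OF nn] na_norm_power_le_1[OF nn y]] F(1)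
        by (simp add: mult_left_le)
      finally show ?thesis .
    qed
    then have "N (\<Sum>k\<in>{1..<p}. of_nat (p choose k) * y ^ k) \<le> N (of_nat p)"
      by (intro na_norm_sum_le[OF nn F(1)])
    then show ?thesis unfolding b_def using F(4) by simp
  qed
  ultimately show ?thesis by blast
qed

lemma na_norm_power_perturb:
  fixes N :: "'r::comm_ring_1 \<Rightarrow> real"
  assumes nn: "is_na_norm N" and x: "N x \<le> 1" and b: "N b \<le> P" and P: "P \<le> 1"
  shows "N ((x + b) ^ q) \<le> max (N (x ^ q)) P"
proof -
  note F = is_na_normD[OF nn]
  have xb: "N (x + b) \<le> 1" using F(3)[of x b] x b P by simp
  define S where "S = (\<Sum>i<q. x ^ (q - Suc i) * (x + b) ^ i)"
  have "(x + b) ^ q - x ^ q = ((x + b) - x) * S"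
    unfolding S_def by (rule power_diff_sumr2)
  then have e: "(x + b) ^ q = x ^ q + b * S" by (simp add: algebra_simps)
  have "N S \<le> 1"
    unfolding S_def
    by (intro na_norm_sum_le[OF nn] na_norm_mult_le_1[OF nn] na_norm_power_le_1[OF nn x]
        na_norm_power_le_1[OF nn xb]) simp
  then have "N (b * S) \<le> P"
    using F(5)[of b S] F(1)[of b] b by (meson mult_left_le order.trans)
  then show ?thesis unfolding e using F(3) by (meson max.mono order.trans order.refl)
qed

lemma na_norm_minus_one_prime_power:
  fixes N :: "'r::comm_ring_1 \<Rightarrow> real"
  assumes nn: "is_na_norm N" and p: "prime p" and u: "\<And>k. N (u ^ k) \<le> 1"
  shows "N ((u - 1) ^ (p ^ m)) \<le> max (N (u ^ (p ^ m) - 1)) (N (of_nat p))"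
proof -
  let ?P = "N (of_nat p)"
  define y where "y = (\<lambda>j. u ^ (p ^ j) - 1)"
  have y: "N (y j) \<le> 1" for j unfolding y_def using na_norm_diff_one_le_1[OF nn u] .
  have y_Suc: "\<exists>b. y j ^ p = y (Suc j) + b \<and> N b \<le> ?P" for j
  proof -
    have "(1 + y j) ^ p - 1 = y (Suc j)"
      unfolding y_def by (simp add: power_mult[symmetric] mult.commute)
    then show ?thesis using na_norm_binomial_prime[OF nn p y] by metis
  qed
  have "N (y j ^ (p ^ i)) \<le> max (N (y m)) ?P" if "j + i = m" for i j
    using that
  proof (induction i arbitrary: j)
    case 0
    then show ?case by simp
  next
    case (Suc i)
    obtain b where b: "y j ^ p = y (Suc j) + b" "N b \<le> ?P" using y_Suc by blast
    have "y j ^ (p ^ Suc i) = (y (Suc j) + b) ^ (p ^ i)"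
      by (simp add: b(1)[symmetric] power_mult[symmetric] mult.commute)
    also have "N \<dots> \<le> max (N (y (Suc j) ^ (p ^ i))) ?P"
      by (rule na_norm_power_perturb[OF nn y b(2) na_norm_of_nat_le_1[OF nn]])
    also have "\<dots> \<le> max (N (y m)) ?P" using Suc by simp
    finally show ?case .
  qed
  from this[of 0 m] show ?thesis unfolding y_def by simp
qed

section \<open>Renorming\<close>

definition admissible_renorm :: "('r::comm_ring_1 \<Rightarrow> real) \<Rightarrow> 'r \<Rightarrow> ('r \<Rightarrow> real) \<Rightarrow> bool" where
  "admissible_renorm N w N' \<longleftrightarrow> is_na_norm N' \<and> (\<forall>y. N' y \<le> N y) \<and>
     (\<exists>C>0. \<forall>y. N y \<le> C * N' y) \<and> (\<forall>y. N' (w * y) = N w * N' y)"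

lemma admissible_renorm_refl:
  "is_na_norm N \<Longrightarrow> (\<And>y. N (w * y) = N w * N y) \<Longrightarrow> admissible_renorm N w N"
  unfolding admissible_renorm_def by (auto intro!: exI[of _ 1])

lemma admissible_renorm_trans:
  assumes N1: "admissible_renorm N w N1" and N2: "admissible_renorm N1 w N2"
  shows "admissible_renorm N w N2"
proof -
  obtain C1 C2 where C1: "C1 > 0" "\<And>y. N y \<le> C1 * N1 y" and C2: "C2 > 0" "\<And>y. N1 y \<le> C2 * N2 y"
    using assms unfolding admissible_renorm_def by blast
  have "N y \<le> (C1 * C2) * N2 y" for y
  proof -
    have "C1 * N1 y \<le> C1 * (C2 * N2 y)" using C2(2)[of y] C1(1) by simp
    then show ?thesis using C1(2)[of y] by (simp add: mult.assoc)
  qed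
  moreover have "C1 * C2 > 0" using C1(1) C2(1) by simp
  moreover have "N1 w = N w"
    using N1 is_na_normD(6) unfolding admissible_renorm_def by (metis mult.right_neutral)
  ultimately show ?thesis using N1 N2 unfolding admissible_renorm_def by (metis order.trans)
qed

lemma norm_complete_admissible_renorm:
  assumes compl: "norm_complete N" and N': "admissible_renorm N w N'"
  shows "norm_complete N'"
  unfolding norm_complete_def
proof (intro allI impI)
  fix X :: "nat \<Rightarrow> 'a"
  assume cauchy: "\<forall>e>0. \<exists>M. \<forall>m\<ge>M. \<forall>n\<ge>M. N' (X m - X n) < e"
  have nn: "is_na_norm N'" and le: "\<And>y. N' y \<le> N y"
    using N' unfolding admissible_renorm_def by auto
  obtain C where C: "C > 0" "\<And>y. N y \<le> C * N' y"
    using N' unfolding admissible_renorm_def by blast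
  have "\<exists>M. \<forall>m\<ge>M. \<forall>n\<ge>M. N (X m - X n) < e" if e: "e > 0" for e
  proof -
    obtain M where M: "\<forall>m\<ge>M. \<forall>n\<ge>M. N' (X m - X n) < e / C" using cauchy divide_pos_pos[OF e C(1)] by blast
    have "N (X m - X n) < e" if "m \<ge> M" "n \<ge> M" for m n
    proof -
      have "C * N' (X m - X n) < e" using M that C(1) by (simp add: pos_less_divide_eq mult.commute)
      then show ?thesis by (rule le_less_trans[OF C(2)])
    qed
    then show ?thesis by blast
  qed
  then obtain L where L: "(\<lambda>n. N (X n - L)) \<longlonglongrightarrow> 0" using compl unfolding norm_complete_def by blast
  have "(\<lambda>n. N' (X n - L)) \<longlonglongrightarrow> 0"
    by (rule Lim_null_comparison[OF _ L])
      (use is_na_normD(1)[OF nn] le in simp)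
  then show "\<exists>L. (\<lambda>n. N' (X n - L)) \<longlonglongrightarrow> 0" by blast
qed

lemma banach_tate_zp_admissible_renorm:
  assumes bt: "banach_tate_zp p N \<phi>" and w: "mult_pseudo_unif N w" and N': "admissible_renorm N w N'"
  shows "banach_tate_zp p N' \<phi>" and "mult_pseudo_unif N' w" and "bounded_equiv N N'"
proof -
  have nn: "is_na_norm N'" and le: "\<And>y. N' y \<le> N y" and w': "\<And>y. N' (w * y) = N w * N' y"
    using N' unfolding admissible_renorm_def by auto
  obtain C where C: "C > 0" "\<And>y. N y \<le> C * N' y"
    using N' unfolding admissible_renorm_def by blast
  have "N' w = N w" using w'[of 1] is_na_normD(6)[OF nn] by simp
  then show w'': "mult_pseudo_unif N' w" using w w' unfolding mult_pseudo_unif_def by simp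
  have "zp_alg_map p N' \<phi>" using bt le unfolding banach_tate_zp_def zp_alg_map_def by (meson order.trans)
  then show "banach_tate_zp p N' \<phi>"
    using bt nn w'' norm_complete_admissible_renorm[OF _ N'] unfolding banach_tate_zp_def by blast
  have "(1 / C) * N y \<le> N' y" for y using C by (simp add: field_simps)
  then show "bounded_equiv N N'"
    unfolding bounded_equiv_def using C(1) le by (intro exI[of _ "1 / C"] conjI exI[of _ 1] allI) auto
qed

text \<open>Given a multiplicative set W of weighted elements (m, a) with N m * a bounded, the
  supremum M y of N (m y) a over W dominates N and satisfies M (m y) a \<le> M y; its operator
  norm is then a norm for which every weighted element has N' m * a \<le> 1.\<close>

locale weighted_renorm =
  fixes N :: "'r::comm_ring_1 \<Rightarrow> real" and W :: "('r \<times> real) set" and C :: real and w :: 'r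
  assumes na_norm: "is_na_norm N"
    and one_in_W: "(1, 1) \<in> W"
    and W_mult: "(m, a) \<in> W \<Longrightarrow> (m', a') \<in> W \<Longrightarrow> (m * m', a * a') \<in> W"
    and W_pos: "(m, a) \<in> W \<Longrightarrow> a > 0"
    and W_bounded: "(m, a) \<in> W \<Longrightarrow> N m * a \<le> C"
    and w_mult: "N (w * y) = N w * N y"
    and w_pos: "N w > 0"
begin

lemmas F = is_na_normD[OF na_norm]

definition M :: "'r \<Rightarrow> real" where
  "M y = (SUP ma\<in>W. N (fst ma * y) * snd ma)"

lemma C_ge_1: "C \<ge> 1"
  using W_bounded[OF one_in_W] F(6) by simp

lemma weight_le:
  assumes ma: "(m, a) \<in> W"
  shows "N (m * y) * a \<le> C * N y"
proof -
  have "N (m * y) * a \<le> (N m * a) * N y"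
    using F(5)[of m y] W_pos[OF ma] by (simp add: mult_right_mono mult.commute mult.left_commute)
  also have "\<dots> \<le> C * N y" using W_bounded[OF ma] F(1)[of y] by (rule mult_right_mono)
  finally show ?thesis .
qed

lemma M_upper: "ma \<in> W \<Longrightarrow> N (fst ma * y) * snd ma \<le> M y"
  unfolding M_def by (intro cSUP_upper bdd_aboveI2[where M = "C * N y"]) (auto intro: weight_le)

lemma M_least: "(\<And>m a. (m, a) \<in> W \<Longrightarrow> N (m * y) * a \<le> B) \<Longrightarrow> M y \<le> B"
  unfolding M_def using one_in_W by (intro cSUP_least) auto

lemma norm_le_M: "N y \<le> M y"
  using M_upper[OF one_in_W, of y] by simp

lemma M_le: "M y \<le> C * N y"
  by (rule M_least) (rule weight_le)

lemma M_pos: "y \<noteq> 0 \<Longrightarrow> M y > 0"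
  using norm_le_M[of y] na_norm_pos[OF na_norm] by (meson less_le_trans)

lemma M_mult_le: "M (y * z) \<le> N y * M z"
proof (rule M_least)
  fix m a assume ma: "(m, a) \<in> W"
  have "N (m * (y * z)) * a \<le> N y * N (m * z) * a"
    using F(5)[of y "m * z"] W_pos[OF ma] by (simp add: mult_right_mono mult.left_commute)
  also have "\<dots> \<le> N y * M z"
    using M_upper[OF ma, of z] F(1)[of y] by (simp add: mult.assoc mult_left_mono)
  finally show "N (m * (y * z)) * a \<le> N y * M z" .
qed

lemma M_weight: "(m, a) \<in> W \<Longrightarrow> M (m * y) * a \<le> M y"
proof -
  assume ma: "(m, a) \<in> W"
  have "M (m * y) \<le> M y / a"
  proof (rule M_least)
    fix m' a' assume "(m', a') \<in> W"
    then have "N ((m' * m) * y) * (a' * a) \<le> M y" using M_upper W_mult[OF _ ma] by fastforce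
    then show "N (m' * (m * y)) * a' \<le> M y / a"
      using W_pos[OF ma] by (simp add: field_simps)
  qed
  then show ?thesis using W_pos[OF ma] by (simp add: field_simps)
qed

lemma M_add: "M (y + z) \<le> max (M y) (M z)"
proof (rule M_least)
  fix m a assume ma: "(m, a) \<in> W"
  have "N (m * (y + z)) * a \<le> max (N (m * y)) (N (m * z)) * a"
    using F(3)[of "m * y" "m * z"] W_pos[OF ma] by (simp add: distrib_left mult_right_mono)
  also have "\<dots> = max (N (m * y) * a) (N (m * z) * a)"
    using W_pos[OF ma] by (simp add: max_mult_distrib_right)
  also have "\<dots> \<le> max (M y) (M z)" using M_upper[OF ma] by (intro max.mono) auto
  finally show "N (m * (y + z)) * a \<le> max (M y) (M z)" .
qed

lemma M_uminus: "M (- y) = M y"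
  unfolding M_def using F(4) by (metis mult_minus_right)

lemma M_w: "M (w * y) = N w * M y"
proof (rule antisym)
  show "M (w * y) \<le> N w * M y" by (rule M_mult_le)
  have "M y \<le> M (w * y) / N w"
  proof (rule M_least)
    fix m a assume ma: "(m, a) \<in> W"
    have "N w * (N (m * y) * a) \<le> M (w * y)"
      using M_upper[OF ma, of "w * y"] w_mult[of "m * y"] by (simp add: mult.left_commute mult.assoc)
    then show "N (m * y) * a \<le> M (w * y) / N w" using w_pos by (simp add: field_simps)
  qed
  then show "N w * M y \<le> M (w * y)" using w_pos by (simp add: field_simps)
qed

definition R :: "'r \<Rightarrow> real" where
  "R y = (SUP z\<in>- {0}. M (y * z) / M z)"

lemma R_upper: "z \<noteq> 0 \<Longrightarrow> M (y * z) / M z \<le> R y"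
  unfolding R_def using M_mult_le M_pos
  by (intro cSUP_upper bdd_aboveI2[where M = "N y"]) (auto simp: pos_divide_le_eq)

lemma R_least: "(\<And>z. z \<noteq> 0 \<Longrightarrow> M (y * z) / M z \<le> B) \<Longrightarrow> R y \<le> B"
  unfolding R_def
proof (rule cSUP_least)
  show "- {0} \<noteq> ({} :: 'r set)" using na_norm_one_neq_zero[OF na_norm] by blast
qed auto

lemma M_nonneg: "M y \<ge> 0"
  using norm_le_M[of y] F(1)[of y] by linarith

lemma R_nonneg: "R y \<ge> 0"
proof -
  have one: "(1::'r) \<noteq> 0" by (rule na_norm_one_neq_zero[OF na_norm])
  have "0 \<le> M (y * 1) / M 1" using M_nonneg M_pos[OF one] by simp
  also have "\<dots> \<le> R y" by (rule R_upper[OF one])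
  finally show ?thesis .
qed

lemma R_le: "R y \<le> N y"
  using M_mult_le M_pos by (intro R_least) (simp add: pos_divide_le_eq)

lemma le_R: "N y \<le> C * R y"
proof -
  have one: "(1::'r) \<noteq> 0" by (rule na_norm_one_neq_zero[OF na_norm])
  have "M 1 \<le> C" using M_le[of 1] F(6) by simp
  then have "N y / C \<le> M y / M 1"
    by (rule frac_le[OF M_nonneg norm_le_M M_pos[OF one]])
  also have "\<dots> \<le> R y" using R_upper[OF one, of y] by simp
  finally show ?thesis using C_ge_1 by (simp add: field_simps)
qed

lemma R_mult: "R (x * y) \<le> R x * R y"
proof (rule R_least)
  fix z :: 'r assume z: "z \<noteq> 0"
  show "M (x * y * z) / M z \<le> R x * R y"
  proof (cases "y * z = 0")
    case True
    then have "M (x * y * z) / M z \<le> 0"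
      using M_le[of "x * y * z"] F(2)[of 0] M_pos[OF z] by (simp add: mult.assoc divide_nonpos_pos)
    then show ?thesis using R_nonneg[of x] R_nonneg[of y] by (meson mult_nonneg_nonneg order.trans)
  next
    case False
    have "M (x * y * z) / M z = (M (x * (y * z)) / M (y * z)) * (M (y * z) / M z)"
      using M_pos[OF False] by (simp add: mult.assoc)
    also have "\<dots> \<le> R x * R y"
      by (rule mult_mono[OF R_upper[OF False] R_upper[OF z] R_nonneg])
        (use M_nonneg M_pos[OF z] in simp)
    finally show ?thesis .
  qed
qed

lemma R_add: "R (x + y) \<le> max (R x) (R y)"
proof (rule R_least)
  fix z :: 'r assume z: "z \<noteq> 0"
  have "M ((x + y) * z) / M z \<le> max (M (x * z)) (M (y * z)) / M z"
    using M_add[of "x * z" "y * z"] M_pos[OF z] by (simp add: distrib_right divide_right_mono)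
  also have "\<dots> = max (M (x * z) / M z) (M (y * z) / M z)"
    using M_pos[OF z] by (simp add: max_divide_distrib_right)
  also have "\<dots> \<le> max (R x) (R y)" using R_upper[OF z] by (intro max.mono) auto
  finally show "M ((x + y) * z) / M z \<le> max (R x) (R y)" .
qed

lemma R_na_norm: "is_na_norm R"
  unfolding is_na_norm_def
proof (intro conjI allI)
  fix x
  show "0 \<le> R x" by (rule R_nonneg)
  show "R x = 0 \<longleftrightarrow> x = 0"
    using le_R[of x] R_le[of x] R_nonneg[of x] F(1)[of x] F(2)[of x] C_ge_1
    by (metis antisym mult_zero_right)
  show "R (- x) = R x" unfolding R_def using M_uminus by (metis mult_minus_left)
next
  fix x y
  show "R (x + y) \<le> max (R x) (R y)" by (rule R_add)
  show "R (x * y) \<le> R x * R y" by (rule R_mult)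
next
  show "R 1 = 1"
    using R_le[of 1] R_upper[OF na_norm_one_neq_zero[OF na_norm], of 1] F(6)
      M_pos[OF na_norm_one_neq_zero[OF na_norm]] by simp
qed

lemma R_weight: "(m, a) \<in> W \<Longrightarrow> R m * a \<le> 1"
proof -
  assume ma: "(m, a) \<in> W"
  have "R m \<le> 1 / a"
    using M_weight[OF ma] M_pos W_pos[OF ma] by (intro R_least) (simp add: field_simps)
  then show ?thesis using W_pos[OF ma] by (simp add: field_simps)
qed

lemma R_w: "R (w * y) = N w * R y"
proof (rule antisym)
  have h: "M (w * y * z) / M z = N w * (M (y * z) / M z)" for z
    using M_w[of "y * z"] by (simp add: mult.assoc)
  show "R (w * y) \<le> N w * R y"
  proof (rule R_least)
    fix z :: 'r assume z: "z \<noteq> 0"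
    show "M (w * y * z) / M z \<le> N w * R y"
      unfolding h by (rule mult_left_mono[OF R_upper[OF z]]) (use w_pos in simp)
  qed
  have "R y \<le> R (w * y) / N w"
  proof (rule R_least)
    fix z :: 'r assume z: "z \<noteq> 0"
    have "N w * (M (y * z) / M z) \<le> R (w * y)" using R_upper[OF z, of "w * y"] unfolding h .
    then show "M (y * z) / M z \<le> R (w * y) / N w" using w_pos by (simp add: field_simps)
  qed
  then show "N w * R y \<le> R (w * y)" using w_pos by (simp add: field_simps)
qed

lemma admissible_renorm_R: "admissible_renorm N w R"
proof -
  have "C > 0" using C_ge_1 by simp
  then show ?thesis unfolding admissible_renorm_def using R_na_norm R_le le_R R_w by blast
qed

end

lemma admissible_renorm_weights:
  fixes N :: "'r::comm_ring_1 \<Rightarrow> real" and W :: "('r \<times> real) set"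
  assumes "is_na_norm N" and "(1, 1) \<in> W"
    and "\<And>m a m' a'. (m, a) \<in> W \<Longrightarrow> (m', a') \<in> W \<Longrightarrow> (m * m', a * a') \<in> W"
    and "\<And>m a. (m, a) \<in> W \<Longrightarrow> a > 0" and "\<And>m a. (m, a) \<in> W \<Longrightarrow> N m * a \<le> C"
    and "\<And>y. N (w * y) = N w * N y" and "N w > 0"
  obtains N' where "admissible_renorm N w N'" and "\<And>m a. (m, a) \<in> W \<Longrightarrow> N' m * a \<le> 1"
proof -
  interpret weighted_renorm N W C w by unfold_locales (use assms in auto)
  show ?thesis using that admissible_renorm_R R_weight by blast
qed

lemma admissible_renorm_w:
  assumes "admissible_renorm N w N'"
  shows "N' w = N w" and "N' (w * y) = N' w * N' y"
proof -
  have "N' (w * y) = N w * N' y" for y using assms unfolding admissible_renorm_def by blast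
  moreover have "N' 1 = 1" using assms is_na_normD(6) unfolding admissible_renorm_def by blast
  ultimately show "N' w = N w" and "N' (w * y) = N' w * N' y" by (metis mult.right_neutral)+
qed

section \<open>Making power-bounded topologically nilpotent elements small\<close>

lemma na_norm_power_weight_le:
  fixes N :: "'r::comm_ring_1 \<Rightarrow> real"
  assumes nn: "is_na_norm N" and g: "N g \<le> 1" and M: "M > 0" and gM: "N (g ^ M) \<le> \<beta>"
    and \<beta>: "\<beta> > 0" and c: "c ^ M = 1 / \<beta>" and c1: "c \<ge> 1"
  shows "N (g ^ j) * c ^ j \<le> 1 / \<beta>"
proof -
  note F = is_na_normD[OF nn]
  define q r where "q = j div M" and "r = j mod M"
  have j: "j = M * q + r" and r: "r < M" unfolding q_def r_def using M by simp_all
  have "N (g ^ j) \<le> N ((g ^ M) ^ q) * N (g ^ r)"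
    unfolding j by (simp add: power_add power_mult F(5))
  also have "\<dots> \<le> \<beta> ^ q * 1"
  proof (rule mult_mono)
    show "N ((g ^ M) ^ q) \<le> \<beta> ^ q"
      using na_norm_power_le[OF nn, of "g ^ M" q] power_mono[OF gM F(1), of q] by linarith
    show "N (g ^ r) \<le> 1" by (rule na_norm_power_le_1[OF nn g])
  qed (use \<beta> F(1) in auto)
  finally have "N (g ^ j) \<le> \<beta> ^ q" by simp
  moreover have "c ^ j = (1 / \<beta>) ^ q * c ^ r" unfolding j by (simp add: power_add power_mult c)
  moreover have "0 \<le> (1 / \<beta>) ^ q * c ^ r" using \<beta> c1 by simp
  ultimately have "N (g ^ j) * c ^ j \<le> \<beta> ^ q * ((1 / \<beta>) ^ q * c ^ r)"
    using mult_right_mono by metis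
  also have "\<dots> = c ^ r" using \<beta> by (simp add: field_simps)
  also have "\<dots> \<le> c ^ M" using r c1 by (simp add: power_increasing)
  finally show ?thesis using c by simp
qed

definition power_weights :: "'r::comm_ring_1 set \<Rightarrow> 'r \<Rightarrow> real \<Rightarrow> ('r \<times> real) set" where
  "power_weights K g c = {(k * g ^ j, c ^ j) | k j. k \<in> K}"

lemma power_weights_mult:
  assumes K_mult: "\<And>x y. x \<in> K \<Longrightarrow> y \<in> K \<Longrightarrow> x * y \<in> K"
    and "(m, a) \<in> power_weights K g c" and "(m', a') \<in> power_weights K g c"
  shows "(m * m', a * a') \<in> power_weights K g c"
proof -
  obtain k j k' j' where k: "m = k * g ^ j" "a = c ^ j" "k \<in> K" "m' = k' * g ^ j'" "a' = c ^ j'" "k' \<in> K"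
    using assms(2,3) unfolding power_weights_def by blast
  then have "m * m' = (k * k') * g ^ (j + j')" "a * a' = c ^ (j + j')"
    by (simp_all add: power_add algebra_simps)
  then show ?thesis unfolding power_weights_def using K_mult[OF k(3,6)] by blast
qed

text \<open>The weights c^j with c^M = 1/\<beta> exactly compensate the decay of N (g^j) along
  multiples of M, so g becomes weighted by c > 1 and hence has new norm at most 1/c.\<close>

lemma admissible_renorm_topologically_nilpotent:
  fixes N :: "'r::comm_ring_1 \<Rightarrow> real" and K :: "'r set"
  assumes nn: "is_na_norm N" and K1: "1 \<in> K" and K_mult: "\<And>x y. x \<in> K \<Longrightarrow> y \<in> K \<Longrightarrow> x * y \<in> K"
    and K: "\<And>k. k \<in> K \<Longrightarrow> N k \<le> 1"
    and w: "\<And>y. N (w * y) = N w * N y" and w_pos: "N w > 0"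
    and g: "N g \<le> 1" and gM: "N (g ^ M) < 1"
  obtains N' where "admissible_renorm N w N'" and "\<And>k. k \<in> K \<Longrightarrow> N' k \<le> 1" and "N' g < 1"
proof -
  note F = is_na_normD[OF nn]
  have M: "M > 0" using gM F(6) by (cases M) auto
  define \<beta> where "\<beta> = max (N (g ^ M)) (1/2)"
  have \<beta>: "\<beta> > 0" "\<beta> < 1" "N (g ^ M) \<le> \<beta>" using gM unfolding \<beta>_def by auto
  define c where "c = root M (1 / \<beta>)"
  have c: "c ^ M = 1 / \<beta>" "c > 1" unfolding c_def using M \<beta> by simp_all
  have W: "(k * g ^ j, c ^ j) \<in> power_weights K g c" if "k \<in> K" for k j
    unfolding power_weights_def using that by blast
  obtain N' where N': "admissible_renorm N w N'"
    and N'W: "\<And>m a. (m, a) \<in> power_weights K g c \<Longrightarrow> N' m * a \<le> 1"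
  proof (rule admissible_renorm_weights[OF nn _ power_weights_mult[OF K_mult], where C = "1 / \<beta>" and w = w])
    show "(1, 1) \<in> power_weights K g c" using W[OF K1, of 0] by simp
    show "a > 0" if "(m, a) \<in> power_weights K g c" for m a
      using that c unfolding power_weights_def by auto
    show "N m * a \<le> 1 / \<beta>" if ma: "(m, a) \<in> power_weights K g c" for m a
    proof -
      obtain k j where m: "m = k * g ^ j" "a = c ^ j" "k \<in> K"
        using ma unfolding power_weights_def by blast
      have "N m \<le> N k * N (g ^ j)" unfolding m(1) by (rule F(5))
      also have "\<dots> \<le> N (g ^ j)" using K[OF m(3)] F(1) by (simp add: mult_left_le_one_le)
      finally have "N m * a \<le> N (g ^ j) * c ^ j" using c(2) unfolding m(2) by (simp add: mult_right_mono)
      also have "\<dots> \<le> 1 / \<beta>" using na_norm_power_weight_le[OF nn g M \<beta>(3,1) c(1)] c(2) by simp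
      finally show ?thesis .
    qed
  qed (use w w_pos in auto)
  have "N' g \<le> 1 / c" using N'W[OF W[OF K1, of 1]] c(2) by (simp add: field_simps)
  also have "\<dots> < 1" using c(2) by simp
  finally have "N' g < 1" .
  moreover have "N' k \<le> 1" if "k \<in> K" for k using N'W[OF W[OF that, of 0]] by simp
  ultimately show ?thesis using that N' by blast
qed

lemma admissible_renorm_topologically_nilpotent_set:
  fixes N :: "'r::comm_ring_1 \<Rightarrow> real" and K G :: "'r set"
  assumes G: "finite G"
    and nn: "is_na_norm N" and K1: "1 \<in> K" and K_mult: "\<And>x y. x \<in> K \<Longrightarrow> y \<in> K \<Longrightarrow> x * y \<in> K"
    and K: "\<And>k. k \<in> K \<Longrightarrow> N k \<le> 1"
    and w: "\<And>y. N (w * y) = N w * N y" and w_pos: "N w > 0"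
    and G_bounded: "\<And>g. g \<in> G \<Longrightarrow> N g \<le> 1" and G_nilpotent: "\<And>g. g \<in> G \<Longrightarrow> \<exists>M. N (g ^ M) < 1"
  obtains N' where "admissible_renorm N w N'" and "\<And>k. k \<in> K \<Longrightarrow> N' k \<le> 1"
    and "\<And>g. g \<in> G \<Longrightarrow> N' g < 1"
proof -
  have "\<exists>N'. admissible_renorm N w N' \<and> (\<forall>k \<in> K. N' k \<le> 1) \<and> (\<forall>g \<in> G. N' g < 1)"
    using G G_bounded G_nilpotent
  proof (induction G rule: finite_induct)
    case empty
    show ?case using admissible_renorm_refl[OF nn w] K by blast
  next
    case (insert g G)
    then obtain N' where N': "admissible_renorm N w N'" "\<forall>k \<in> K. N' k \<le> 1" "\<forall>g \<in> G. N' g < 1"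
      by blast
    have le: "N' y \<le> N y" for y using N'(1) unfolding admissible_renorm_def by blast
    obtain M where "N (g ^ M) < 1" using insert.prems(2) by blast
    then have gM: "N' (g ^ M) < 1" using le le_less_trans by blast
    have g: "N' g \<le> 1" using insert.prems(1) le order.trans by blast
    have nn': "is_na_norm N'" using N'(1) unfolding admissible_renorm_def by blast
    have "N' w > 0" using admissible_renorm_w(1)[OF N'(1)] w_pos by simp
    then obtain N'' where N'': "admissible_renorm N' w N''" "\<And>k. k \<in> K \<Longrightarrow> N'' k \<le> 1" "N'' g < 1"
      using admissible_renorm_topologically_nilpotent[OF nn' K1 K_mult _ admissible_renorm_w(2)[OF N'(1)] _ g gM]
        N'(2) by blast
    have "N'' y \<le> N' y" for y using N''(1) unfolding admissible_renorm_def by blast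
    then have "\<forall>g' \<in> insert g G. N'' g' < 1" using N''(3) N'(3) le_less_trans by blast
    then show ?case using admissible_renorm_trans[OF N'(1) N''(1)] N''(2) by blast
  qed
  then show ?thesis using that by blast
qed

section \<open>Renorming along a continuous character\<close>

lemma character_bounded:
  assumes fs: "\<forall>f \<in> set fs. monic_nonconst f" and p: "p > 0"
    and nn: "is_na_norm N" and kc: "cont_character p fs N \<kappa>"
  obtains B where "\<And>t. t \<in> Tzero p fs \<Longrightarrow> N (\<kappa> t) \<le> B"
proof -
  note F = is_na_normD[OF nn]
  obtain n where n: "\<And>s. s \<in> Tzero p fs \<Longrightarrow> Tred n fs s = Tred n fs (Tone p fs) \<Longrightarrow> N (\<kappa> s - 1) < 1"
    using character_near_one[OF fs kc] by blast
  obtain R where R: "R \<subseteq> Tzero p fs" "finite R" "\<And>t. t \<in> Tzero p fs \<Longrightarrow> \<exists>r \<in> R. Tred n fs r = Tred n fs t"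
    using Tzero_finite_representatives[OF fs p order.refl, where n = n] by blast
  have "N (\<kappa> t) \<le> Max ((\<lambda>r. N (\<kappa> r)) ` R)" if t: "t \<in> Tzero p fs" for t
  proof -
    obtain r where r: "r \<in> R" "Tred n fs r = Tred n fs t" using R(3)[OF t] by blast
    obtain s where s: "s \<in> Tzero p fs" "Tred n fs s = Tred n fs (Tone p fs)" "\<kappa> t = \<kappa> r * \<kappa> s"
      using character_factor[OF fs kc t _ r(2)] r(1) R(1) by blast
    have "N (\<kappa> s) \<le> 1" using F(3)[of "\<kappa> s - 1" 1] n[OF s(1,2)] F(6) by simp
    have "N (\<kappa> t) \<le> N (\<kappa> r) * N (\<kappa> s)" unfolding s(3) by (rule F(5))
    also have "\<dots> \<le> N (\<kappa> r)" using \<open>N (\<kappa> s) \<le> 1\<close> F(1) by (simp add: mult_left_le)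
    also have "\<dots> \<le> Max ((\<lambda>r. N (\<kappa> r)) ` R)" using r(1) R(2) by (intro Max_ge) auto
    finally show ?thesis .
  qed
  then show ?thesis using that by blast
qed

lemma admissible_renorm_character_bounded:
  assumes fs: "\<forall>f \<in> set fs. monic_nonconst f" and p: "p > 0"
    and nn: "is_na_norm N" and kc: "cont_character p fs N \<kappa>"
    and w: "\<And>y. N (w * y) = N w * N y" and w_pos: "N w > 0"
  obtains N' where "admissible_renorm N w N'" and "\<And>t. t \<in> Tzero p fs \<Longrightarrow> N' (\<kappa> t) \<le> 1"
proof -
  obtain B where B: "\<And>t. t \<in> Tzero p fs \<Longrightarrow> N (\<kappa> t) \<le> B"
    using character_bounded[OF fs p nn kc] by blast
  define W where "W = (\<lambda>x. (x, 1 :: real)) ` \<kappa> ` Tzero p fs"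
  obtain N' where N': "admissible_renorm N w N'" and W: "\<And>m a. (m, a) \<in> W \<Longrightarrow> N' m * a \<le> 1"
  proof (rule admissible_renorm_weights[OF nn, of W B w])
    show "(1, 1) \<in> W" unfolding W_def using character_image_one[OF fs kc] by blast
    show "(m * m', a * a') \<in> W" if "(m, a) \<in> W" "(m', a') \<in> W" for m a m' a'
      using that character_image_mult[OF fs kc] unfolding W_def by auto
  qed (use w w_pos B in \<open>auto simp: W_def\<close>)
  have "N' (\<kappa> t) \<le> 1" if "t \<in> Tzero p fs" for t
    using W[of "\<kappa> t" 1] that unfolding W_def by auto
  then show ?thesis using that[OF N'] by blast
qed

lemma character_Tker_topologically_nilpotent:
  assumes p: "prime p" and fs: "\<forall>f \<in> set fs. monic_nonconst f"
    and nn: "is_na_norm N" and kc: "cont_character p fs N \<kappa>" and Np: "N (of_nat p) < 1"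
    and bounded: "\<And>t. t \<in> Tzero p fs \<Longrightarrow> N (\<kappa> t) \<le> 1"
    and near: "\<And>s. s \<in> Tzero p fs \<Longrightarrow> Tred n fs s = Tred n fs (Tone p fs) \<Longrightarrow> N (\<kappa> s - 1) < 1"
    and t: "t \<in> Tker p fs k" and k: "k \<ge> 1"
  shows "N ((\<kappa> t - 1) ^ (p ^ n)) < 1"
proof -
  have t0: "t \<in> Tzero p fs" using t unfolding Tker_def by blast
  have pow: "\<kappa> (Tpow p fs t j) = \<kappa> t ^ j" for j by (rule character_Tpow[OF fs kc t0])
  have "Tpow p fs t (p ^ n) \<in> Tker p fs (k + n)" by (rule Tpow_prime_power_in_Tker[OF fs t k])
  then have "N (\<kappa> t ^ (p ^ n) - 1) < 1"
    using near[OF Tpow_in_Tzero[OF fs t0]] Tker_Tred[OF fs] pow by simp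
  moreover have "N ((\<kappa> t - 1) ^ (p ^ n)) \<le> max (N (\<kappa> t ^ (p ^ n) - 1)) (N (of_nat p))"
    using na_norm_minus_one_prime_power[OF nn p] bounded[OF Tpow_in_Tzero[OF fs t0]] pow by simp
  ultimately show ?thesis using Np by simp
qed

lemma admissible_renorm_character_Tker:
  assumes p: "prime p" and fs: "\<forall>f \<in> set fs. monic_nonconst f"
    and nn: "is_na_norm N" and kc: "cont_character p fs N \<kappa>" and Np: "N (of_nat p) < 1"
    and bounded: "\<And>t. t \<in> Tzero p fs \<Longrightarrow> N (\<kappa> t) \<le> 1"
    and w: "\<And>y. N (w * y) = N w * N y" and w_pos: "N w > 0"
  obtains N' where "admissible_renorm N w N'" and "\<And>t. t \<in> Tzero p fs \<Longrightarrow> N' (\<kappa> t) \<le> 1"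
    and "\<And>t. t \<in> Tker p fs (eps p) \<Longrightarrow> N' (\<kappa> t - 1) < 1"
proof -
  have p0: "p > 0" and eps: "eps p \<ge> 1" using p prime_gt_0_nat unfolding eps_def by auto
  have ker: "Tker p fs (eps p) \<subseteq> Tzero p fs" unfolding Tker_def by blast
  obtain n where n: "\<And>s. s \<in> Tzero p fs \<Longrightarrow> Tred n fs s = Tred n fs (Tone p fs) \<Longrightarrow> N (\<kappa> s - 1) < 1"
    using character_near_one[OF fs kc] by blast
  obtain R where R: "R \<subseteq> Tker p fs (eps p)" "finite R"
      "\<And>t. t \<in> Tker p fs (eps p) \<Longrightarrow> \<exists>r \<in> R. Tred n fs r = Tred n fs t"
    using Tzero_finite_representatives[OF fs p0 ker, where n = n] by blast
  obtain N' where N': "admissible_renorm N w N'" "\<And>k. k \<in> \<kappa> ` Tzero p fs \<Longrightarrow> N' k \<le> 1"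
      "\<And>g. g \<in> (\<lambda>r. \<kappa> r - 1) ` R \<Longrightarrow> N' g < 1"
  proof (rule admissible_renorm_topologically_nilpotent_set[OF _ nn, of "(\<lambda>r. \<kappa> r - 1) ` R"])
    show "1 \<in> \<kappa> ` Tzero p fs" by (rule character_image_one[OF fs kc])
    show "x * y \<in> \<kappa> ` Tzero p fs" if "x \<in> \<kappa> ` Tzero p fs" "y \<in> \<kappa> ` Tzero p fs" for x y
      using character_image_mult[OF fs kc that] .
    show "N g \<le> 1" if "g \<in> (\<lambda>r. \<kappa> r - 1) ` R" for g
      using that R(1) ker na_norm_diff_one_le_1[OF nn bounded] by auto
    show "\<exists>M. N (g ^ M) < 1" if "g \<in> (\<lambda>r. \<kappa> r - 1) ` R" for g
      using that R(1) character_Tker_topologically_nilpotent[OF p fs nn kc Np bounded n _ eps] by blast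
  qed (use R(2) bounded w w_pos in auto)
  have "N' (\<kappa> t - 1) < 1" if t: "t \<in> Tker p fs (eps p)" for t
  proof -
    have nn': "is_na_norm N'" and le: "\<And>y. N' y \<le> N y" using N'(1) unfolding admissible_renorm_def by auto
    obtain r where r: "r \<in> R" "Tred n fs r = Tred n fs t" using R(3)[OF t] by blast
    have r0: "r \<in> Tzero p fs" using r(1) R(1) ker by blast
    obtain s where s: "s \<in> Tzero p fs" "Tred n fs s = Tred n fs (Tone p fs)" "\<kappa> t = \<kappa> r * \<kappa> s"
      using character_factor[OF fs kc _ r0 r(2)] t ker by blast
    have "N' (\<kappa> s - 1) < 1" using le n[OF s(1,2)] by (rule le_less_trans)
    then show ?thesis
      using na_norm_mult_minus_one_lt_1[OF nn' N'(2)[OF imageI[OF r0]] N'(3)[OF imageI[OF r(1)]]] s(3)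
      by simp
  qed
  then show ?thesis using that N' by blast
qed

theorem mainTheorem13:
  fixes p :: nat and fs :: "int poly list"
    and N :: "'r::comm_ring_1 \<Rightarrow> real" and w :: 'r
    and \<phi> :: "(nat \<Rightarrow> int poly) \<Rightarrow> 'r"
    and \<kappa> :: "(nat \<Rightarrow> nat \<Rightarrow> int poly) \<Rightarrow> 'r"
  assumes "prime p"
    and "\<forall>f \<in> set fs. is_local_int_ring p f"
    and "noetherian_ring TYPE('r)"
    and "banach_tate_zp p N \<phi>"
    and "mult_pseudo_unif N w"
    and "cont_character p fs N \<kappa>"
  shows "\<exists>N'. banach_tate_zp p N' \<phi> \<and>
           (\<exists>s>0. bounded_equiv (\<lambda>r. N r powr s) N') \<and>
           (\<forall>t \<in> Tzero p fs. N' (\<kappa> t) \<le> 1) \<and>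
           (\<forall>t \<in> Tker p fs (eps p). N' (\<kappa> t - 1) < 1) \<and>
           mult_pseudo_unif N' w"
proof -
  have fs: "\<forall>f \<in> set fs. monic_nonconst f"
    using assms(2) unfolding is_local_int_ring_def monic_nonconst_def by auto
  have nn: "is_na_norm N" and zp: "zp_alg_map p N \<phi>"
    using assms(4) unfolding banach_tate_zp_def by auto
  have w: "\<And>y. N (w * y) = N w * N y" and "w \<noteq> 0"
    using assms(5) na_norm_one_neq_zero[OF nn] unfolding mult_pseudo_unif_def by auto
  then have w_pos: "N w > 0" using na_norm_pos[OF nn] by blast
  obtain N1 where N1: "admissible_renorm N w N1" and bounded: "\<And>t. t \<in> Tzero p fs \<Longrightarrow> N1 (\<kappa> t) \<le> 1"
    using admissible_renorm_character_bounded[OF fs _ nn assms(6) w w_pos] assms(1) prime_gt_0_nat by blast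
  have nn1: "is_na_norm N1" and le: "\<And>y. N1 y \<le> N y" using N1 unfolding admissible_renorm_def by auto
  have "1 / real p < 1" using prime_gt_1_nat[OF assms(1)] by simp
  then have "N1 (of_nat p) < 1" using le[of "of_nat p"] zp_alg_map_norm_prime[OF zp] by linarith
  then obtain N2 where N2: "admissible_renorm N1 w N2" "\<And>t. t \<in> Tzero p fs \<Longrightarrow> N2 (\<kappa> t) \<le> 1"
      "\<And>t. t \<in> Tker p fs (eps p) \<Longrightarrow> N2 (\<kappa> t - 1) < 1"
    using admissible_renorm_character_Tker[OF assms(1) fs nn1 cont_character_mono[OF assms(6) le] _ bounded
        admissible_renorm_w(2)[OF N1]] admissible_renorm_w(1)[OF N1] w_pos by auto
  have N2': "admissible_renorm N w N2" by (rule admissible_renorm_trans[OF N1 N2(1)])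
  have "bounded_equiv (\<lambda>r. N r powr 1) N2"
    using banach_tate_zp_admissible_renorm(3)[OF assms(4,5) N2'] is_na_normD(1)[OF nn] by simp
  then show ?thesis
    using banach_tate_zp_admissible_renorm(1,2)[OF assms(4,5) N2'] N2(2,3)
    by (intro exI[of _ N2] conjI exI[of _ "1::real"]) auto
qed

end
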